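(* Let $(X,d)$ be a uniformly locally finite extended metric space that is not amenable. Then for all $n\in\mathbb N$ and $R>0$ there exists $S>0$ such that for every finite set $M\subseteq X$ there are points $x_1,\dots,x_{n|M|}$ such that the closed balls $\bar B(x_i,R)$, $i=1,\dots,n|M|$, are pairwise disjoint and all contained in $\bar B(M,S)$.
   Context: An extended metric may take value $\infty$; $\bar B(A,R)=\{x:d(x,A)\le R\}$. Uniformly locally finite: $\sup_{x}|\bar B(x,R)|<\infty$ for all $R>0$. $\partial_RA=\{x\in X:d(x,A)\le R\text{ and }d(x,X\setminus A)\le R\}$. $(X,d)$ is amenable if for every $R,\varepsilon>0$ there is a finite nonempty $F\subseteq X$ with $|\partial_RF|\le\varepsilon|F|$. *)

theory Defs
  imports "HOL-Library.Extended_Real"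
begin

definition ext_metric :: "'a set \<Rightarrow> ('a \<Rightarrow> 'a \<Rightarrow> ereal) \<Rightarrow> bool" where
  "ext_metric X d \<longleftrightarrow>
     (\<forall>x\<in>X. \<forall>y\<in>X. d x y \<ge> 0) \<and>
     (\<forall>x\<in>X. \<forall>y\<in>X. d x y = 0 \<longleftrightarrow> x = y) \<and>
     (\<forall>x\<in>X. \<forall>y\<in>X. d x y = d y x) \<and>
     (\<forall>x\<in>X. \<forall>y\<in>X. \<forall>z\<in>X. d x z \<le> d x y + d y z)"

text \<open>Distance from a point to a set (infimum; \<infinity> for the empty set).\<close>
definition setdist_e :: "('a \<Rightarrow> 'a \<Rightarrow> ereal) \<Rightarrow> 'a \<Rightarrow> 'a set \<Rightarrow> ereal" where
  "setdist_e d x A = (INF a\<in>A. d x a)"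

definition cball_e :: "'a set \<Rightarrow> ('a \<Rightarrow> 'a \<Rightarrow> ereal) \<Rightarrow> 'a \<Rightarrow> real \<Rightarrow> 'a set" where
  "cball_e X d x R = {y\<in>X. d x y \<le> ereal R}"

definition cball_set :: "'a set \<Rightarrow> ('a \<Rightarrow> 'a \<Rightarrow> ereal) \<Rightarrow> 'a set \<Rightarrow> real \<Rightarrow> 'a set" where
  "cball_set X d A R = {y\<in>X. setdist_e d y A \<le> ereal R}"

definition unif_locally_finite :: "'a set \<Rightarrow> ('a \<Rightarrow> 'a \<Rightarrow> ereal) \<Rightarrow> bool" where
  "unif_locally_finite X d \<longleftrightarrow>
     (\<forall>R>0. \<exists>N::nat. \<forall>x\<in>X. finite (cball_e X d x R) \<and> card (cball_e X d x R) \<le> N)"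

definition boundary_e :: "'a set \<Rightarrow> ('a \<Rightarrow> 'a \<Rightarrow> ereal) \<Rightarrow> real \<Rightarrow> 'a set \<Rightarrow> 'a set" where
  "boundary_e X d R A = {x\<in>X. setdist_e d x A \<le> ereal R \<and> setdist_e d x (X - A) \<le> ereal R}"

definition amenable_e :: "'a set \<Rightarrow> ('a \<Rightarrow> 'a \<Rightarrow> ereal) \<Rightarrow> bool" where
  "amenable_e X d \<longleftrightarrow>
     (\<forall>R>0. \<forall>\<epsilon>>0. \<exists>F. F \<subseteq> X \<and> finite F \<and> F \<noteq> {} \<and>
        finite (boundary_e X d R F) \<and> real (card (boundary_e X d R F)) \<le> \<epsilon> * real (card F))"

end

theory Submission
  imports Defs
begin

text \<open>
  Non-amenability gives \<open>T, \<epsilon> > 0\<close> with \<open>|\<partial>\<^sub>T F| > \<epsilon> |F|\<close> for every finite nonempty \<open>F\<close>.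
  The boundary lies within \<open>2T\<close> of the shell \<open>B(F,2T) - F\<close>, so by uniform local finiteness
  the shell has at least a fixed fraction of \<open>|F|\<close> points: \<open>|B(F,2T)| \<ge> c |F|\<close> with \<open>c > 1\<close>.
  Iterating, \<open>|B(M,2kT)| \<ge> c\<^sup>k |M|\<close>. A maximal \<open>2R\<close>-separated subset \<open>Y\<close> of \<open>B(M,2kT)\<close>
  covers it by \<open>2R\<close>-balls, each of bounded size, so for large \<open>k\<close> it has at least \<open>n |M|\<close>
  points; the \<open>R\<close>-balls around \<open>Y\<close> are disjoint and lie in \<open>B(M, 2kT + R)\<close>.
\<close>

lemma setdist_e_le_iff:
  assumes "finite F"
  shows "setdist_e d y F \<le> ereal r \<longleftrightarrow> (\<exists>a\<in>F. d y a \<le> ereal r)"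
  using assms by (induction F rule: finite_induct) (auto simp: setdist_e_def min_le_iff_disj top_ereal_def)

lemma obtain_maximal_separated_subset:
  assumes "finite G" "\<forall>x\<in>G. \<forall>y\<in>G. d x y = d y x" "\<forall>x\<in>G. d x x = 0" "r \<ge> 0"
  obtains Y where "Y \<subseteq> G" "\<forall>y\<in>Y. \<forall>y'\<in>Y. y \<noteq> y' \<longrightarrow> d y y' > ereal r"
    "\<forall>g\<in>G. \<exists>y\<in>Y. d y g \<le> ereal r"
proof -
  have "\<exists>Y\<subseteq>G. (\<forall>y\<in>Y. \<forall>y'\<in>Y. y \<noteq> y' \<longrightarrow> d y y' > ereal r) \<and> (\<forall>g\<in>G. \<exists>y\<in>Y. d y g \<le> ereal r)"
    using assms(1-3)
  proof (induction G rule: finite_induct)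
    case empty
    then show ?case by auto
  next
    case (insert g G)
    then obtain Y where Y: "Y \<subseteq> G" "\<forall>y\<in>Y. \<forall>y'\<in>Y. y \<noteq> y' \<longrightarrow> d y y' > ereal r"
      "\<forall>g\<in>G. \<exists>y\<in>Y. d y g \<le> ereal r" by auto
    show ?case
    proof (cases "\<exists>y\<in>Y. d y g \<le> ereal r")
      case True
      then show ?thesis using Y by (intro exI[of _ Y]) auto
    next
      case False
      have "\<forall>y\<in>Y. d g y > ereal r"
      proof
        fix y assume "y \<in> Y"
        then have "d y g > ereal r" and "d g y = d y g"
          using False insert.prems(1) Y(1) by (auto simp: not_le)
        then show "d g y > ereal r" by simp
      qed
      moreover have "d g g \<le> ereal r" using insert.prems(2) assms(4) by simp
      ultimately show ?thesis using Y False
        by (intro exI[of _ "insert g Y"]) (auto simp: not_le)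
    qed
  qed
  then show thesis using that by blast
qed

locale ext_metric_space =
  fixes X :: "'a set" and d :: "'a \<Rightarrow> 'a \<Rightarrow> ereal"
  assumes ext_metric: "ext_metric X d"
begin

lemma dist_self: "x \<in> X \<Longrightarrow> d x x = 0"
  and dist_commute: "x \<in> X \<Longrightarrow> y \<in> X \<Longrightarrow> d x y = d y x"
  and dist_triangle: "x \<in> X \<Longrightarrow> y \<in> X \<Longrightarrow> z \<in> X \<Longrightarrow> d x z \<le> d x y + d y z"
  using ext_metric unfolding ext_metric_def by blast+

lemma dist_triangle_le:
  assumes "x \<in> X" "y \<in> X" "z \<in> X" "d x y \<le> ereal r" "d y z \<le> ereal s"
  shows "d x z \<le> ereal (r + s)"
proof -
  have "d x z \<le> d x y + d y z" using assms(1-3) by (rule dist_triangle)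
  also have "\<dots> \<le> ereal r + ereal s" using assms(4,5) by (rule add_mono)
  finally show ?thesis by simp
qed

lemma cball_set_eq_UN:
  assumes "finite F" "F \<subseteq> X"
  shows "cball_set X d F r = (\<Union>a\<in>F. cball_e X d a r)"
  using assms dist_commute
  by (auto simp: cball_set_def cball_e_def setdist_e_le_iff subset_iff)

lemma subset_cball_set:
  assumes "F \<subseteq> X" "r \<ge> 0"
  shows "F \<subseteq> cball_set X d F r"
proof
  fix x assume x: "x \<in> F"
  then have "setdist_e d x F \<le> d x x" unfolding setdist_e_def by (rule INF_lower)
  also have "\<dots> \<le> ereal r" using x assms dist_self by auto
  finally show "x \<in> cball_set X d F r" using x assms(1) by (auto simp: cball_set_def)
qed

lemma cball_set_mono: "r \<le> s \<Longrightarrow> cball_set X d F r \<subseteq> cball_set X d F s"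
  using order_trans[of _ "ereal r" "ereal s"] by (auto simp: cball_set_def)

lemma cball_e_subset_cball_set:
  assumes "finite F" "F \<subseteq> X" "a \<in> cball_set X d F r"
  shows "cball_e X d a s \<subseteq> cball_set X d F (r + s)"
proof
  fix z assume z: "z \<in> cball_e X d a s"
  from assms obtain b where b: "b \<in> F" "d a b \<le> ereal r" and aX: "a \<in> X"
    by (auto simp: cball_set_def setdist_e_le_iff)
  have "d z b \<le> ereal (s + r)"
    using z b aX assms(2) by (intro dist_triangle_le[of z a b]) (auto simp: cball_e_def dist_commute)
  then show "z \<in> cball_set X d F (r + s)"
    using z b assms(1) by (auto simp: cball_set_def cball_e_def setdist_e_le_iff add.commute)
qed

lemma cball_set_cball_set_subset:
  assumes "finite F" "F \<subseteq> X" "finite (cball_set X d F r)"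
  shows "cball_set X d (cball_set X d F r) s \<subseteq> cball_set X d F (r + s)"
  using cball_e_subset_cball_set[OF assms(1,2)] assms(3)
  by (subst cball_set_eq_UN) (auto simp: cball_set_def)

lemma card_cball_set_le:
  assumes N: "\<forall>x\<in>X. finite (cball_e X d x r) \<and> card (cball_e X d x r) \<le> N"
    and F: "finite F" "F \<subseteq> X"
  shows "card (cball_set X d F r) \<le> N * card F"
proof -
  have "card (cball_set X d F r) \<le> (\<Sum>a\<in>F. card (cball_e X d a r))"
    unfolding cball_set_eq_UN[OF F] using F(1) by (rule card_UN_le)
  also have "\<dots> \<le> (\<Sum>a\<in>F. N)" using N F(2) by (intro sum_mono) auto
  finally show ?thesis by (simp add: mult.commute)
qed

text \<open>Points of \<open>F\<close> are only within \<open>T\<close> of \<open>X - F\<close> in the sense of an infimum, which need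
  not be attained; the slack from \<open>T\<close> to \<open>2T\<close> provides an actual nearby point.\<close>
lemma boundary_subset_cball_set_shell:
  assumes "T > 0" "finite F" "F \<subseteq> X"
  shows "boundary_e X d T F \<subseteq> cball_set X d (cball_set X d F (2*T) - F) (2*T)"
    (is "_ \<subseteq> cball_set X d ?D _")
proof
  fix x assume "x \<in> boundary_e X d T F"
  then have xX: "x \<in> X" and near_F: "setdist_e d x F \<le> ereal T"
    and near_out: "setdist_e d x (X - F) < ereal (2*T)"
    using \<open>T > 0\<close> by (auto simp: boundary_e_def intro: le_less_trans)
  have D_X: "?D \<subseteq> X" by (auto simp: cball_set_def)
  show "x \<in> cball_set X d ?D (2*T)"
  proof (cases "x \<in> F")
    case False
    have "setdist_e d x F \<le> ereal (2*T)" using near_F \<open>T > 0\<close> by (simp add: order_trans)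
    then have "x \<in> ?D" using xX False by (simp add: cball_set_def)
    then show ?thesis using subset_cball_set[OF D_X, of "2*T"] \<open>T > 0\<close> by auto
  next
    case True
    from near_out obtain a where a: "a \<in> X - F" "d x a < ereal (2*T)"
      by (auto simp: setdist_e_def INF_less_iff)
    have "setdist_e d a F \<le> d a x" unfolding setdist_e_def using True by (rule INF_lower)
    also have "\<dots> = d x a" using a(1) xX dist_commute by simp
    finally have "a \<in> ?D" using a by (simp add: cball_set_def)
    then have "setdist_e d x ?D \<le> d x a" unfolding setdist_e_def by (rule INF_lower)
    with a(2) have "setdist_e d x ?D \<le> ereal (2*T)" by simp
    then show ?thesis using xX by (simp add: cball_set_def)
  qed
qed

end

locale ulf_ext_metric_space = ext_metric_space +
  assumes ulf: "unif_locally_finite X d"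
begin

lemma obtain_cball_card_bound:
  assumes "r > 0"
  obtains N :: nat where "N > 0" "\<forall>x\<in>X. finite (cball_e X d x r) \<and> card (cball_e X d x r) \<le> N"
proof -
  from ulf assms obtain N :: nat where "\<forall>x\<in>X. finite (cball_e X d x r) \<and> card (cball_e X d x r) \<le> N"
    unfolding unif_locally_finite_def by blast
  then show thesis using that[of "Suc N"] by force
qed

lemma finite_cball_set:
  assumes "finite F" "F \<subseteq> X"
  shows "finite (cball_set X d F r)"
proof -
  have "max r 1 > 0" by simp
  then obtain N where "N > 0"
    "\<forall>x\<in>X. finite (cball_e X d x (max r 1)) \<and> card (cball_e X d x (max r 1)) \<le> N"
    by (rule obtain_cball_card_bound)
  then have "finite (cball_set X d F (max r 1))"
    using assms by (auto simp: cball_set_eq_UN)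
  then show ?thesis using cball_set_mono[of r "max r 1" F] by (auto intro: finite_subset)
qed

lemma nonamenable_expansion:
  assumes "\<not> amenable_e X d"
  obtains \<rho> c :: real where "\<rho> > 0" "c > 1"
    "\<And>F. finite F \<Longrightarrow> F \<subseteq> X \<Longrightarrow> c * card F \<le> card (cball_set X d F \<rho>)"
proof -
  from assms obtain T \<epsilon> :: real where T: "T > 0" and \<epsilon>: "\<epsilon> > 0" and large_boundary:
    "\<forall>F. F \<subseteq> X \<and> finite F \<and> F \<noteq> {} \<longrightarrow>
       \<not> (finite (boundary_e X d T F) \<and> card (boundary_e X d T F) \<le> \<epsilon> * card F)"
    unfolding amenable_e_def by blast
  obtain N :: nat where N: "N > 0" "\<forall>x\<in>X. finite (cball_e X d x (2*T)) \<and> card (cball_e X d x (2*T)) \<le> N"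
    using obtain_cball_card_bound[of "2*T"] T by auto
  have growth: "(1 + \<epsilon> / N) * card F \<le> card (cball_set X d F (2*T))" if F: "finite F" "F \<subseteq> X" for F
  proof (cases "F = {}")
    case False
    define D where "D = cball_set X d F (2*T) - F"
    have D: "finite D" "D \<subseteq> X" using finite_cball_set[OF F] by (auto simp: D_def cball_set_def)
    have B_sub: "boundary_e X d T F \<subseteq> cball_set X d D (2*T)"
      unfolding D_def using T F by (rule boundary_subset_cball_set_shell)
    then have "finite (boundary_e X d T F)" using finite_cball_set[OF D] by (rule finite_subset)
    with large_boundary F False have "\<epsilon> * card F < card (boundary_e X d T F)"
      by (simp add: not_le)
    also have "card (boundary_e X d T F) \<le> card (cball_set X d D (2*T))"
      using finite_cball_set[OF D] B_sub by (rule card_mono)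
    also have "\<dots> \<le> N * card D" by (rule card_cball_set_le[OF N(2) D])
    finally have expansion: "\<epsilon> * card F < N * card D" by simp
    have "card F \<le> card (cball_set X d F (2*T))"
      using F subset_cball_set[of F "2*T"] T finite_cball_set[OF F] by (intro card_mono) auto
    moreover have "card D = card (cball_set X d F (2*T)) - card F"
      unfolding D_def using F subset_cball_set[of F "2*T"] T by (intro card_Diff_subset) auto
    ultimately have card_eq: "real (card (cball_set X d F (2*T))) = card F + card D" by simp
    have "(1 + \<epsilon> / N) * card F = card F + \<epsilon> * card F / N" using N(1) by (simp add: field_simps)
    also have "\<dots> \<le> card F + card D" using expansion N(1) by (simp add: pos_divide_le_eq mult.commute)
    finally show ?thesis using card_eq by simp
  qed simp
  show thesis
  proof (rule that[OF _ _ growth])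
    show "2*T > 0" "1 + \<epsilon> / N > 1" using T \<epsilon> N(1) by auto
  qed
qed

lemma exponential_growth:
  fixes \<rho> c :: real
  assumes c: "c \<ge> 0"
    and expand: "\<And>F. finite F \<Longrightarrow> F \<subseteq> X \<Longrightarrow> c * card F \<le> card (cball_set X d F \<rho>)"
    and M: "finite M" "M \<subseteq> X"
  shows "c ^ k * card M \<le> card (cball_set X d M (k * \<rho>))"
proof (induction k)
  case 0
  show ?case
    using M subset_cball_set[OF M(2), of 0] finite_cball_set[OF M] by (simp add: card_mono)
next
  case (Suc k)
  define G where "G = cball_set X d M (k * \<rho>)"
  have G: "finite G" "G \<subseteq> X" using finite_cball_set[OF M] by (auto simp: G_def cball_set_def)
  have "c ^ Suc k * card M \<le> c * card G" using mult_left_mono[OF Suc c] by (simp add: G_def mult.assoc)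
  also have "\<dots> \<le> card (cball_set X d G \<rho>)" using G by (rule expand)
  also have "\<dots> \<le> card (cball_set X d M (Suc k * \<rho>))"
  proof -
    have "cball_set X d G \<rho> \<subseteq> cball_set X d M (k * \<rho> + \<rho>)"
      unfolding G_def using M finite_cball_set[OF M] by (rule cball_set_cball_set_subset)
    then have "card (cball_set X d G \<rho>) \<le> card (cball_set X d M (Suc k * \<rho>))"
      using finite_cball_set[OF M] by (intro card_mono) (auto simp: distrib_right add.commute)
    then show ?thesis by simp
  qed
  finally show ?case .
qed

lemma disjoint_cball_e:
  assumes "x \<in> X" "y \<in> X" "d x y > ereal (2*R)"
  shows "cball_e X d x R \<inter> cball_e X d y R = {}"
proof -
  have "\<not> (d x z \<le> ereal R \<and> d y z \<le> ereal R)" if "z \<in> X" for z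
  proof
    assume "d x z \<le> ereal R \<and> d y z \<le> ereal R"
    then have "d x y \<le> ereal (R + R)"
      using assms(1,2) \<open>z \<in> X\<close> dist_commute by (intro dist_triangle_le[of x z y]) auto
    then show False using assms(3) by simp
  qed
  then show ?thesis by (auto simp: cball_e_def)
qed

lemma many_disjoint_balls:
  assumes "R > 0" "finite G" "G \<subseteq> X"
    and N: "\<forall>x\<in>X. finite (cball_e X d x (2*R)) \<and> card (cball_e X d x (2*R)) \<le> N"
  obtains Y where "Y \<subseteq> G" "card G \<le> N * card Y"
    "\<And>y y'. y \<in> Y \<Longrightarrow> y' \<in> Y \<Longrightarrow> y \<noteq> y' \<Longrightarrow> cball_e X d y R \<inter> cball_e X d y' R = {}"
proof -
  have "\<forall>x\<in>G. \<forall>y\<in>G. d x y = d y x" "\<forall>x\<in>G. d x x = 0"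
    using assms(3) dist_commute dist_self by blast+
  moreover have "2*R \<ge> 0" using assms(1) by simp
  ultimately obtain Y where Y: "Y \<subseteq> G"
    "\<forall>y\<in>Y. \<forall>y'\<in>Y. y \<noteq> y' \<longrightarrow> d y y' > ereal (2*R)" "\<forall>g\<in>G. \<exists>y\<in>Y. d y g \<le> ereal (2*R)"
    by (rule obtain_maximal_separated_subset[OF assms(2)])
  have Y_fin: "finite Y" using Y(1) assms(2) by (rule finite_subset)
  have Y_X: "Y \<subseteq> X" using Y(1) assms(3) by (rule subset_trans)
  have "G \<subseteq> cball_set X d Y (2*R)"
  proof
    fix g assume g: "g \<in> G"
    with Y(3) obtain y where "y \<in> Y" "d y g \<le> ereal (2*R)" by blast
    then show "g \<in> cball_set X d Y (2*R)"
      using g assms(3) unfolding cball_set_eq_UN[OF Y_fin Y_X] by (auto simp: cball_e_def)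
  qed
  with finite_cball_set[OF Y_fin Y_X] have "card G \<le> card (cball_set X d Y (2*R))"
    by (rule card_mono)
  also have "\<dots> \<le> N * card Y" using N Y_fin Y_X by (rule card_cball_set_le)
  finally show thesis
  proof (rule that[OF Y(1)])
    fix y y' assume "y \<in> Y" "y' \<in> Y" "y \<noteq> y'"
    then show "cball_e X d y R \<inter> cball_e X d y' R = {}"
      using Y(2) Y_X by (intro disjoint_cball_e) blast+
  qed
qed

lemma nonamenable_disjoint_balls:
  assumes "\<not> amenable_e X d" "R > 0"
  obtains S where "S > 0"
    "\<And>M. finite M \<Longrightarrow> M \<subseteq> X \<Longrightarrow> \<exists>Y\<subseteq>X. finite Y \<and> n * card M \<le> card Y \<and>
       (\<forall>y\<in>Y. \<forall>y'\<in>Y. y \<noteq> y' \<longrightarrow> cball_e X d y R \<inter> cball_e X d y' R = {}) \<and>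
       (\<forall>y\<in>Y. cball_e X d y R \<subseteq> cball_set X d M S)"
proof -
  obtain \<rho> c :: real where \<rho>: "\<rho> > 0" and c: "c > 1"
    and expand: "\<And>F. finite F \<Longrightarrow> F \<subseteq> X \<Longrightarrow> c * card F \<le> card (cball_set X d F \<rho>)"
    using nonamenable_expansion[OF assms(1)] by blast
  obtain N :: nat where N: "N > 0" "\<forall>x\<in>X. finite (cball_e X d x (2*R)) \<and> card (cball_e X d x (2*R)) \<le> N"
    using obtain_cball_card_bound[of "2*R"] assms(2) by auto
  obtain k where k: "real (n * N) < c ^ k" using real_arch_pow[OF c] by blast
  have "\<exists>Y\<subseteq>X. finite Y \<and> n * card M \<le> card Y \<and>
       (\<forall>y\<in>Y. \<forall>y'\<in>Y. y \<noteq> y' \<longrightarrow> cball_e X d y R \<inter> cball_e X d y' R = {}) \<and>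
       (\<forall>y\<in>Y. cball_e X d y R \<subseteq> cball_set X d M (k * \<rho> + R))"
    if M: "finite M" "M \<subseteq> X" for M
  proof -
    define G where "G = cball_set X d M (k * \<rho>)"
    have G: "finite G" "G \<subseteq> X" using finite_cball_set[OF M] by (auto simp: G_def cball_set_def)
    obtain Y where Y: "Y \<subseteq> G" "card G \<le> N * card Y"
      "\<And>y y'. y \<in> Y \<Longrightarrow> y' \<in> Y \<Longrightarrow> y \<noteq> y' \<Longrightarrow> cball_e X d y R \<inter> cball_e X d y' R = {}"
      using many_disjoint_balls[OF assms(2) G N(2)] by blast
    have "real (n * N) * card M \<le> c ^ k * card M" using k by (simp add: mult_right_mono)
    also have "\<dots> \<le> card G" unfolding G_def using exponential_growth[OF _ expand M] c by simp
    also have "\<dots> \<le> real (N * card Y)" using Y(2) by linarith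
    finally have "n * card M \<le> card Y"
      using N(1) by (simp add: mult.commute mult.left_commute) (metis of_nat_le_iff of_nat_mult)
    moreover have "cball_e X d y R \<subseteq> cball_set X d M (k * \<rho> + R)" if "y \<in> Y" for y
      using cball_e_subset_cball_set[OF M] Y(1) that by (auto simp: G_def)
    ultimately show ?thesis using Y G finite_subset[OF Y(1)] by (intro exI[of _ Y]) auto
  qed
  then show thesis using that[of "k * \<rho> + R"] \<rho> assms(2) by (simp add: add_nonneg_pos)
qed

lemma nonamenable_disjoint_ball_sequence:
  assumes "\<not> amenable_e X d" "R > 0"
  shows "\<exists>S>0. \<forall>M. M \<subseteq> X \<and> finite M \<longrightarrow>
    (\<exists>x :: nat \<Rightarrow> 'a. (\<forall>i < n * card M. x i \<in> X) \<and>
      (\<forall>i < n * card M. \<forall>j < n * card M. i \<noteq> j \<longrightarrow> cball_e X d (x i) R \<inter> cball_e X d (x j) R = {}) \<and>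
      (\<forall>i < n * card M. cball_e X d (x i) R \<subseteq> cball_set X d M S))"
proof -
  obtain S where "S > 0" and balls: "\<And>M. finite M \<Longrightarrow> M \<subseteq> X \<Longrightarrow> \<exists>Y\<subseteq>X. finite Y \<and>
      n * card M \<le> card Y \<and> (\<forall>y\<in>Y. \<forall>y'\<in>Y. y \<noteq> y' \<longrightarrow> cball_e X d y R \<inter> cball_e X d y' R = {}) \<and>
      (\<forall>y\<in>Y. cball_e X d y R \<subseteq> cball_set X d M S)"
    using nonamenable_disjoint_balls[OF assms] by blast
  have "\<exists>x :: nat \<Rightarrow> 'a. (\<forall>i < n * card M. x i \<in> X) \<and>
      (\<forall>i < n * card M. \<forall>j < n * card M. i \<noteq> j \<longrightarrow> cball_e X d (x i) R \<inter> cball_e X d (x j) R = {}) \<and>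
      (\<forall>i < n * card M. cball_e X d (x i) R \<subseteq> cball_set X d M S)"
    if "M \<subseteq> X \<and> finite M" for M
  proof -
    from that have "finite M" "M \<subseteq> X" by auto
    from balls[OF this] obtain Y where Y: "Y \<subseteq> X" "finite Y" "n * card M \<le> card Y"
      "\<forall>y\<in>Y. \<forall>y'\<in>Y. y \<noteq> y' \<longrightarrow> cball_e X d y R \<inter> cball_e X d y' R = {}"
      "\<forall>y\<in>Y. cball_e X d y R \<subseteq> cball_set X d M S"
      by blast
    obtain x :: "nat \<Rightarrow> 'a" where x: "x ` {..<n * card M} \<subseteq> Y" "inj_on x {..<n * card M}"
      using card_le_inj[of "{..<n * card M}" Y] Y(2,3) by auto
    have "cball_e X d (x i) R \<inter> cball_e X d (x j) R = {}"
      if "i < n * card M" "j < n * card M" "i \<noteq> j" for i j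
      using that x Y(4) by (simp add: image_subset_iff inj_on_eq_iff)
    then show ?thesis using x(1) Y(1,5) by (intro exI[of _ x]) (auto simp: image_subset_iff)
  qed
  with \<open>S > 0\<close> show ?thesis by blast
qed

end

theorem proposition3p7:
  fixes X :: "'a set" and d :: "'a \<Rightarrow> 'a \<Rightarrow> ereal"
  assumes "ext_metric X d"
    and "unif_locally_finite X d"
    and "\<not> amenable_e X d"
  shows "\<forall>(n::nat) (R::real). R > 0 \<longrightarrow> (\<exists>S::real. S > 0 \<and>
           (\<forall>M. M \<subseteq> X \<and> finite M \<longrightarrow>
              (\<exists>x :: nat \<Rightarrow> 'a.
                 (\<forall>i < n * card M. x i \<in> X) \<and>
                 (\<forall>i < n * card M. \<forall>j < n * card M. i \<noteq> j \<longrightarrow>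
                     cball_e X d (x i) R \<inter> cball_e X d (x j) R = {}) \<and>
                 (\<forall>i < n * card M. cball_e X d (x i) R \<subseteq> cball_set X d M S))))"
proof -
  interpret ulf_ext_metric_space X d using assms(1,2) by unfold_locales
  show ?thesis by (intro allI impI nonamenable_disjoint_ball_sequence[OF assms(3)])
qed

end
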